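(* Let $\mathbb{F}$ be a field and let $(\mathscr{P},\mathscr{B},\mathrm{I})$ be the affine plane over $\mathbb{F}$: $\mathscr{P}=\mathbb{F}\times\mathbb{F}$; the lines are the vertical lines $L_b$ ($b\in\mathbb{F}$) and the non-vertical lines $L_{m,b}$ ($m,b\in\mathbb{F}$); and the incidence is given by $(b,y)\ \mathrm{I}\ L_b$ for all $y\in\mathbb{F}$ and $(x,mx+b)\ \mathrm{I}\ L_{m,b}$ for all $x\in\mathbb{F}$. Let $\Gamma$ be its incidence graph, take the gain group to be $(\mathbb{F},+)$ acting on $\Lambda=\mathbb{F}$ by addition, and define the gain function $\varphi$ on edges by $$\varphi(e)=\begin{cases}-by, & \text{if } e=\{L_b,(b,y)\},\\ xb, & \text{if } e=\{L_{m,b},(x,mx+b)\}.\end{cases}$$ Then $\mathfrak{M}(\Gamma,\varphi)$ is a generalized quadrangle.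
   Context: An incidence structure is a triple $(\mathscr{P},\mathscr{B},\mathrm{I})$ where $\mathscr{P}$ (points) and $\mathscr{B}$ (lines) are nonempty disjoint sets and $\mathrm{I}\subseteq\mathscr{P}\times\mathscr{B}$ is a nonempty incidence relation; write $p\ \mathrm{I}\ b$ or $b\ \mathrm{I}\ p$ when $(p,b)\in\mathrm{I}$. Its incidence graph $\Gamma$ is the bipartite graph with vertex set $\mathscr{P}\cup\mathscr{B}$ and an edge $bp$ for each incident pair $b\ \mathrm{I}\ p$; every edge is oriented from its line to its point. A gain function with gain group $G$ assigns to each edge $e$ an element $\varphi(e)\in G$ (extended to a homomorphism on the free group on the edges, so $\varphi(e^{-1})=\varphi(e)^{-1}$). The gain group acts on a nonempty set $\Lambda$ on the left. Construction $\mathfrak{M}(\Gamma,\varphi)$: the incidence structure $(\mathscr{P}',\mathscr{B}',\mathrm{I}')$ whose points are the formal symbols $x_p$ ($p\in\mathscr{P}$) and $y_{b,\lambda}$ ($b\in\mathscr{B},\lambda\in\Lambda$), whose lines are the formal symbols $z_{p,\lambda}$ ($p\in\mathscr{P},\lambda\in\Lambda$), and whose incidences are exactly: $x_p\ \mathrm{I}'\ z_{p,\lambda}$ for all $\lambda$, and $y_{b,\lambda}\ \mathrm{I}'\ z_{p,\mu}$ whenever $b\ \mathrm{I}\ p$ and $\mu=\varphi(bp)\cdot\lambda$. A $k$-chain is a sequence $(u_0,\dots,u_k)$ of elements of $\mathscr{P}\cup\mathscr{B}$ with $u_i$ incident with $u_{i-1}$ for $1\le i\le k$; the distance $d(u,v)$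 is the least $k$ such that a $k$-chain from $u$ to $v$ exists ($\infty$ if none). A generalized quadrangle is an incidence structure such that (1) $d(u,v)\le 4$ for all elements $u,v$, and (2) whenever $d(u,v)=k<4$ there is a unique $k$-chain from $u$ to $v$. *)

theory Defs
  imports "HOL-Library.Extended_Nat"
begin

definition is_incidence_structure :: "'p set \<Rightarrow> 'l set \<Rightarrow> ('p \<Rightarrow> 'l \<Rightarrow> bool) \<Rightarrow> bool" where
  "is_incidence_structure P B I \<longleftrightarrow> P \<noteq> {} \<and> B \<noteq> {} \<and>
     (\<exists>p b. I p b) \<and> (\<forall>p b. I p b \<longrightarrow> p \<in> P \<and> b \<in> B)"

definition elems :: "'p set \<Rightarrow> 'l set \<Rightarrow> ('p + 'l) set" where
  "elems P B = Inl ` P \<union> Inr ` B"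

fun incid :: "('p \<Rightarrow> 'l \<Rightarrow> bool) \<Rightarrow> ('p + 'l) \<Rightarrow> ('p + 'l) \<Rightarrow> bool" where
  "incid I (Inl p) (Inr b) = I p b"
| "incid I (Inr b) (Inl p) = I p b"
| "incid I _ _ = False"

definition is_chain :: "'p set \<Rightarrow> 'l set \<Rightarrow> ('p \<Rightarrow> 'l \<Rightarrow> bool) \<Rightarrow> nat \<Rightarrow>
    ('p + 'l) \<Rightarrow> ('p + 'l) \<Rightarrow> ('p + 'l) list \<Rightarrow> bool" where
  "is_chain P B I k u v us \<longleftrightarrow> length us = Suc k \<and> us ! 0 = u \<and> us ! k = v \<and>
     set us \<subseteq> elems P B \<and> (\<forall>i. 1 \<le> i \<and> i \<le> k \<longrightarrow> incid I (us ! i) (us ! (i - 1)))"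

definition dist :: "'p set \<Rightarrow> 'l set \<Rightarrow> ('p \<Rightarrow> 'l \<Rightarrow> bool) \<Rightarrow>
    ('p + 'l) \<Rightarrow> ('p + 'l) \<Rightarrow> enat" where
  "dist P B I u v = (if \<exists>k us. is_chain P B I k u v us
      then enat (LEAST k. \<exists>us. is_chain P B I k u v us) else \<infinity>)"

definition generalized_quadrangle :: "'p set \<Rightarrow> 'l set \<Rightarrow> ('p \<Rightarrow> 'l \<Rightarrow> bool) \<Rightarrow> bool" where
  "generalized_quadrangle P B I \<longleftrightarrow> is_incidence_structure P B I \<and>
     (\<forall>u \<in> elems P B. \<forall>v \<in> elems P B. dist P B I u v \<le> 4) \<and>
     (\<forall>u \<in> elems P B. \<forall>v \<in> elems P B. \<forall>k. dist P B I u v = enat k \<and> k < 4 \<longrightarrow>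
        (\<exists>!us. is_chain P B I k u v us))"

datatype ('p, 'l, 'a) mpoint = MX 'p | MY 'l 'a
datatype ('p, 'a) mline = MZ 'p 'a

text \<open>Gain function phi b p = gain of the edge bp (oriented from line b to point p);
act g lam is the left action of the gain group on Lambda.\<close>

definition M_points :: "'p set \<Rightarrow> 'l set \<Rightarrow> 'a set \<Rightarrow> ('p, 'l, 'a) mpoint set" where
  "M_points P B Lam = MX ` P \<union> {MY b lam | b lam. b \<in> B \<and> lam \<in> Lam}"

definition M_lines :: "'p set \<Rightarrow> 'a set \<Rightarrow> ('p, 'a) mline set" where
  "M_lines P Lam = {MZ p lam | p lam. p \<in> P \<and> lam \<in> Lam}"

fun M_inc :: "'p set \<Rightarrow> 'l set \<Rightarrow> ('p \<Rightarrow> 'l \<Rightarrow> bool) \<Rightarrow> 'a set \<Rightarrow>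
    ('l \<Rightarrow> 'p \<Rightarrow> 'g) \<Rightarrow> ('g \<Rightarrow> 'a \<Rightarrow> 'a) \<Rightarrow> ('p, 'l, 'a) mpoint \<Rightarrow> ('p, 'a) mline \<Rightarrow> bool" where
  "M_inc P B I Lam phi act (MX p) (MZ p' mu) \<longleftrightarrow> p \<in> P \<and> mu \<in> Lam \<and> p' = p"
| "M_inc P B I Lam phi act (MY b lam) (MZ p mu) \<longleftrightarrow>
     b \<in> B \<and> lam \<in> Lam \<and> p \<in> P \<and> mu \<in> Lam \<and> I p b \<and> mu = act (phi b p) lam"

datatype 'a aline = Vert 'a | NonVert 'a 'a

fun aff_inc :: "('a::field \<times> 'a) \<Rightarrow> 'a aline \<Rightarrow> bool" where
  "aff_inc (x, y) (Vert b) \<longleftrightarrow> x = b"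
| "aff_inc (x, y) (NonVert m b) \<longleftrightarrow> y = m * x + b"

text \<open>The gain function of the theorem (only its values on edges matter).\<close>
fun aff_gain :: "'a::field aline \<Rightarrow> ('a \<times> 'a) \<Rightarrow> 'a" where
  "aff_gain (Vert b) (x, y) = - (b * y)"
| "aff_gain (NonVert m b) (x, y) = x * b"

end

theory Submission
  imports Defs
begin

(* Along every line M the gain is a potential for the determinant: for r, q on M,
   phi(M, r) - phi(M, q) = det(r, q). Hence two lines z_{r,mu} and z_{q,nu} with r ~= q are
   concurrent iff mu - nu = det(r, q), and then they meet only in y_{M,k} with M the line rq.
   This gives the Payne-Thas axioms: two points lie on at most one common line, and a point not
   on z_{q,nu} lies on exactly one line meeting z_{q,nu}. For y_{L,lambda} with q not on L the
   latter holds because r |-> phi(L, r) - det(r, q) maps the points of L bijectively onto F.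
   These axioms force every two elements of the incidence graph to be at distance at most 4 and
   exclude cycles of length less than 8, i.e. shortest chains of length below 4 are unique. *)

lemma incid_sym: "incid I x y = incid I y x"
  by (cases x; cases y) auto

lemma incid_isl: "incid I x y \<Longrightarrow> isl x \<noteq> isl y"
  by (cases x; cases y) auto

lemma all_1_to_Suc_iff:
  "(\<forall>i. 1 \<le> i \<and> i \<le> Suc k \<longrightarrow> Q i) \<longleftrightarrow> Q 1 \<and> (\<forall>j. 1 \<le> j \<and> j \<le> k \<longrightarrow> Q (Suc j))"
  by (auto, metis Suc_le_mono le_Suc_eq not0_implies_Suc not_less_eq_eq)

lemma is_chain_0: "is_chain P B I 0 u v us \<longleftrightarrow> us = [u] \<and> v = u \<and> u \<in> elems P B"
  unfolding is_chain_def by (auto simp: length_Suc_conv)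

lemma is_chain_Suc:
  "is_chain P B I (Suc k) u v us \<longleftrightarrow>
     (\<exists>w ws. us = u # ws \<and> u \<in> elems P B \<and> incid I w u \<and> is_chain P B I k w v ws)"
proof -
  have shift: "incid I ((u # ws) ! Suc j) ((u # ws) ! (Suc j - 1)) \<longleftrightarrow> incid I (ws ! j) (ws ! (j - 1))"
    if "1 \<le> j" for ws and j :: nat
    using that by (cases j) auto
  show ?thesis
    unfolding is_chain_def all_1_to_Suc_iff
    by (cases us) (auto simp: shift)
qed

lemma is_chain_singleton: "v \<in> elems P B \<Longrightarrow> is_chain P B I 0 v v [v]"
  by (simp add: is_chain_0)

lemma is_chain_Cons:
  "u \<in> elems P B \<Longrightarrow> incid I u w \<Longrightarrow> is_chain P B I k w v ws \<Longrightarrow> is_chain P B I (Suc k) u v (u # ws)"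
  by (auto simp: is_chain_Suc incid_sym)

lemma dist_le_chain: "is_chain P B I k u v us \<Longrightarrow> dist P B I u v \<le> enat k"
  unfolding dist_def by (auto intro: Least_le)

lemma dist_enat_chain:
  assumes "dist P B I u v = enat k"
  obtains us where "is_chain P B I k u v us"
proof -
  have ex: "\<exists>k us. is_chain P B I k u v us" and k: "k = (LEAST k. \<exists>us. is_chain P B I k u v us)"
    using assms unfolding dist_def by (auto split: if_splits)
  have "\<exists>us. is_chain P B I k u v us"
    unfolding k using ex by (rule LeastI_ex)
  then show ?thesis using that by blast
qed

(* The Payne-Thas axioms of a generalized quadrangle, without the thickness conditions. *)
locale gq_axioms =
  fixes P :: "'p set" and B :: "'l set" and I :: "'p \<Rightarrow> 'l \<Rightarrow> bool"
  assumes incident_mem: "I p b \<Longrightarrow> p \<in> P \<and> b \<in> B"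
    and ex_incident: "\<exists>p b. I p b"
    and two_points_two_lines: "I p b \<Longrightarrow> I q b \<Longrightarrow> I p c \<Longrightarrow> I q c \<Longrightarrow> p = q \<or> b = c"
    and ex1_line_meeting: "p \<in> P \<Longrightarrow> b \<in> B \<Longrightarrow> \<not> I p b \<Longrightarrow> \<exists>!c. I p c \<and> (\<exists>q. I q c \<and> I q b)"
begin

lemma incid_mem_elems: "incid I x y \<Longrightarrow> x \<in> elems P B \<and> y \<in> elems P B"
  using incident_mem by (cases x; cases y) (auto simp: elems_def)

lemma ex_incid:
  assumes "x \<in> elems P B"
  shows "\<exists>y. incid I x y"
proof (cases x)
  case (Inl p)
  then have "p \<in> P" using assms by (auto simp: elems_def)
  obtain b where "b \<in> B" using ex_incident incident_mem by blast
  have "\<exists>c. I p c"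
  proof (cases "I p b")
    case False
    then show ?thesis using ex1_line_meeting[OF \<open>p \<in> P\<close> \<open>b \<in> B\<close>] by blast
  qed blast
  then obtain c where "incid I x (Inr c)" using Inl by auto
  then show ?thesis ..
next
  case (Inr b)
  then have "b \<in> B" using assms by (auto simp: elems_def)
  obtain p where "p \<in> P" using ex_incident incident_mem by blast
  have "\<exists>q. I q b"
  proof (cases "I p b")
    case False
    then show ?thesis using ex1_line_meeting[OF \<open>p \<in> P\<close> \<open>b \<in> B\<close>] by blast
  qed blast
  then obtain q where "incid I x (Inl q)" using Inr by auto
  then show ?thesis ..
qed

lemma common_neighbour_unique:
  assumes "incid I x w" "incid I w y" "incid I x w'" "incid I w' y" "x \<noteq> y"
  shows "w = w'"
proof (cases x)
  case (Inl p)
  then obtain b q b' where "w = Inr b" "y = Inl q" "w' = Inr b'"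
    using assms by (cases w; cases y; cases w') auto
  with assms Inl have "I p b" "I q b" "I p b'" "I q b'" "p \<noteq> q" by auto
  then show ?thesis using two_points_two_lines \<open>w = Inr b\<close> \<open>w' = Inr b'\<close> by blast
next
  case (Inr c)
  then obtain p c' p' where "w = Inl p" "y = Inr c'" "w' = Inl p'"
    using assms by (cases w; cases y; cases w') auto
  with assms Inr have "I p c" "I p' c" "I p c'" "I p' c'" "c \<noteq> c'" by auto
  then show ?thesis using two_points_two_lines \<open>w = Inl p\<close> \<open>w' = Inl p'\<close> by blast
qed

lemma path3_exists:
  assumes "x \<in> elems P B" "y \<in> elems P B" "isl x \<noteq> isl y" "\<not> incid I x y"
  shows "\<exists>w1 w2. incid I x w1 \<and> incid I w1 w2 \<and> incid I w2 y"
proof (cases x)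
  case (Inl p)
  then obtain b where "y = Inr b" using assms by (cases y) auto
  with assms Inl have "p \<in> P" "b \<in> B" "\<not> I p b" by (auto simp: elems_def)
  then obtain c q where "I p c" "I q c" "I q b" using ex1_line_meeting by blast
  then have "incid I x (Inr c) \<and> incid I (Inr c) (Inl q) \<and> incid I (Inl q) y"
    using Inl \<open>y = Inr b\<close> by simp
  then show ?thesis by blast
next
  case (Inr b)
  then obtain p where "y = Inl p" using assms by (cases y) auto
  with assms Inr have "p \<in> P" "b \<in> B" "\<not> I p b" by (auto simp: elems_def)
  then obtain c q where "I p c" "I q c" "I q b" using ex1_line_meeting by blast
  then have "incid I x (Inl q) \<and> incid I (Inl q) (Inr c) \<and> incid I (Inr c) y"
    using Inr \<open>y = Inl p\<close> by simp
  then show ?thesis by blast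
qed

lemma path3_unique:
  assumes path: "incid I x w1" "incid I w1 w2" "incid I w2 y"
    and "incid I x w1'" "incid I w1' w2'" "incid I w2' y"
    and "\<not> incid I x y"
  shows "w1 = w1' \<and> w2 = w2'"
proof -
  have from_point: "v1 = v1' \<and> v2 = v2'"
    if v: "incid I (Inl p) v1" "incid I v1 v2" "incid I v2 z"
      "incid I (Inl p) v1'" "incid I v1' v2'" "incid I v2' z" "\<not> incid I (Inl p) z"
    for p v1 v2 v1' v2' z
  proof -
    obtain c q b c' q' where cases: "v1 = Inr c" "v2 = Inl q" "z = Inr b" "v1' = Inr c'" "v2' = Inl q'"
      using v by (cases v1; cases v2; cases z; cases v1'; cases v2') auto
    have "p \<in> P" "b \<in> B" using v cases incident_mem by auto
    moreover have "\<not> I p b" using v cases by simp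
    ultimately have "c = c'" using ex1_line_meeting[of p b] v cases by auto
    then have "v1 = v1'" using cases by simp
    moreover have "v1 \<noteq> z" using v by auto
    ultimately show ?thesis using common_neighbour_unique v by metis
  qed
  show ?thesis
  proof (cases x)
    case Inl
    then show ?thesis using from_point assms by blast
  next
    case Inr
    then obtain p where "y = Inl p"
      using path by (cases w1; cases w2; cases y) auto
    moreover have "incid I y w2" "incid I w2 w1" "incid I w1 x"
      "incid I y w2'" "incid I w2' w1'" "incid I w1' x" "\<not> incid I y x"
      using assms incid_sym by metis+
    ultimately show ?thesis
      using from_point[of p w2 w1 x w2' w1'] by blast
  qed
qed

lemma ex_chain_le_3:
  assumes "x \<in> elems P B" "y \<in> elems P B" "isl x \<noteq> isl y"
  shows "\<exists>k us. k \<le> 3 \<and> is_chain P B I k x y us"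
proof (cases "incid I x y")
  case True
  then have "is_chain P B I 1 x y [x, y]"
    using assms by (simp add: is_chain_Cons is_chain_singleton)
  then show ?thesis by (intro exI conjI) auto
next
  case False
  then obtain w1 w2 where "incid I x w1" "incid I w1 w2" "incid I w2 y"
    using path3_exists assms by blast
  then have "is_chain P B I 3 x y [x, w1, w2, y]"
    unfolding numeral_3_eq_3 using assms incid_mem_elems
    by (blast intro: is_chain_Cons is_chain_singleton)
  then show ?thesis by (intro exI conjI) auto
qed

lemma dist_le_4:
  assumes "x \<in> elems P B" "y \<in> elems P B"
  shows "dist P B I x y \<le> 4"
proof -
  have "\<exists>k us. k \<le> 4 \<and> is_chain P B I k x y us"
  proof (cases "isl x = isl y")
    case True
    obtain w where "incid I x w" using ex_incid assms by blast
    then have "w \<in> elems P B" "isl w \<noteq> isl y"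
      using incid_mem_elems incid_isl True by blast+
    then obtain k us where "k \<le> 3" "is_chain P B I k w y us"
      using ex_chain_le_3 assms by blast
    then have "is_chain P B I (Suc k) x y (x # us)"
      using \<open>incid I x w\<close> assms by (intro is_chain_Cons)
    then show ?thesis using \<open>k \<le> 3\<close> by (intro exI conjI) auto
  next
    case False
    then obtain k us where "k \<le> 3" "is_chain P B I k x y us"
      using ex_chain_le_3 assms by blast
    then show ?thesis by (intro exI conjI) auto
  qed
  then obtain k us where "k \<le> 4" and chain: "is_chain P B I k x y us" by blast
  have "dist P B I x y \<le> enat k" using chain by (rule dist_le_chain)
  also have "enat k \<le> 4" using \<open>k \<le> 4\<close> by (simp add: numeral_eq_enat)
  finally show ?thesis .
qed

lemma shortest_chain_unique:
  assumes dist: "dist P B I u v = enat k" and "k < 4"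
    and us: "is_chain P B I k u v us" and vs: "is_chain P B I k u v vs"
  shows "us = vs"
proof -
  have no_shorter: "\<not> is_chain P B I j u v ws" if "j < k" for j ws
    using dist_le_chain[of P B I j u v ws] dist that by auto
  have "u \<in> elems P B" using us by (auto simp: is_chain_def)
  consider "k = 0" | "k = 1" | "k = 2" | "k = 3" using \<open>k < 4\<close> by linarith
  then show ?thesis
  proof cases
    case 1
    then show ?thesis using us vs by (simp add: is_chain_0)
  next
    case 2
    then show ?thesis using us vs by (simp add: is_chain_Suc is_chain_0)
  next
    case 3
    obtain w where w: "us = [u, w, v]" "incid I u w" "incid I w v"
      using us 3 by (auto simp: numeral_2_eq_2 is_chain_Suc is_chain_0 incid_sym)
    obtain w' where w': "vs = [u, w', v]" "incid I u w'" "incid I w' v"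
      using vs 3 by (auto simp: numeral_2_eq_2 is_chain_Suc is_chain_0 incid_sym)
    have "u \<noteq> v"
      using no_shorter[of 0 "[u]"] is_chain_singleton[OF \<open>u \<in> elems P B\<close>] 3 by auto
    then show ?thesis using common_neighbour_unique w w' by metis
  next
    case 4
    obtain w1 w2 where w: "us = [u, w1, w2, v]" "incid I u w1" "incid I w1 w2" "incid I w2 v"
      using us 4 by (auto simp: numeral_3_eq_3 is_chain_Suc is_chain_0 incid_sym)
    obtain w1' w2' where w': "vs = [u, w1', w2', v]" "incid I u w1'" "incid I w1' w2'" "incid I w2' v"
      using vs 4 by (auto simp: numeral_3_eq_3 is_chain_Suc is_chain_0 incid_sym)
    have "\<not> incid I u v"
    proof
      assume "incid I u v"
      then have "is_chain P B I 1 u v [u, v]"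
        using incid_mem_elems by (simp add: is_chain_Cons is_chain_singleton)
      then show False using no_shorter 4 by simp
    qed
    then show ?thesis using path3_unique w w' by simp
  qed
qed

theorem generalized_quadrangle: "generalized_quadrangle P B I"
proof -
  have "is_incidence_structure P B I"
    unfolding is_incidence_structure_def using ex_incident incident_mem by blast
  moreover have "\<exists>!us. is_chain P B I k u v us" if "dist P B I u v = enat k" "k < 4" for u v k
    using dist_enat_chain[OF that(1)] shortest_chain_unique[OF that] by blast
  ultimately show ?thesis
    unfolding generalized_quadrangle_def using dist_le_4 by blast
qed

end

definition det2 :: "'a::field \<times> 'a \<Rightarrow> 'a \<times> 'a \<Rightarrow> 'a" where
  "det2 r q = fst r * snd q - fst q * snd r"

lemma aff_ex_line_through: "\<exists>L. aff_inc p L \<and> aff_inc q L"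
proof -
  obtain a b c d where pq: "p = (a, b)" "q = (c, d)" by fastforce
  show ?thesis
  proof (cases "a = c")
    case True
    then show ?thesis using pq by (intro exI[of _ "Vert a"]) simp
  next
    case False
    define m where "m = (d - b) / (c - a)"
    have "m * (c - a) = d - b"
      using False unfolding m_def by simp
    then have "d = m * c + (b - m * a)"
      by (simp add: algebra_simps)
    then show ?thesis using pq by (intro exI[of _ "NonVert m (b - m * a)"]) simp
  qed
qed

lemma aff_line_unique:
  assumes "p \<noteq> q" "aff_inc p L" "aff_inc q L" "aff_inc p L'" "aff_inc q L'"
  shows "L = L'"
proof -
  obtain a b c d where pq: "p = (a, b)" "q = (c, d)" by fastforce
  show ?thesis
  proof (cases L; cases L')
    fix m e m' e'
    assume L: "L = NonVert m e" "L' = NonVert m' e'"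
    then have "a \<noteq> c" using assms pq by auto
    have "(m - m') * (a - c) = (m * a + e) - (m * c + e) - ((m' * a + e') - (m' * c + e'))"
      by (simp add: algebra_simps)
    also have "\<dots> = 0"
      using assms pq L by simp
    finally have "(m - m') * (a - c) = 0" .
    then have "m = m'" using \<open>a \<noteq> c\<close> by simp
    then show ?thesis using assms pq L by simp
  qed (use assms pq in auto)
qed

lemma aff_gain_diff:
  "aff_inc r M \<Longrightarrow> aff_inc q M \<Longrightarrow> aff_gain M r - aff_gain M q = det2 r q"
  by (cases r; cases q; cases M) (auto simp: det2_def algebra_simps)

lemma ex1_point_with_gain:
  assumes "\<not> aff_inc q L"
  shows "\<exists>!r. aff_inc r L \<and> aff_gain L r - det2 r q = t"
proof -
  obtain a b where q: "q = (a, b)" by fastforce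
  show ?thesis
  proof (cases L)
    case (Vert e)
    then have nz: "a - e \<noteq> 0" using assms q by simp
    have gain: "aff_gain L (e, y) - det2 (e, y) q = (a - e) * y - e * b" for y
      using Vert q by (simp add: det2_def algebra_simps)
    define y where "y = (t + e * b) / (a - e)"
    have "(a - e) * y = t + e * b" using nz unfolding y_def by simp
    show ?thesis
    proof (rule ex1I[of _ "(e, y)"])
      show "aff_inc (e, y) L \<and> aff_gain L (e, y) - det2 (e, y) q = t"
        using Vert gain[of y] \<open>(a - e) * y = t + e * b\<close> by simp
    next
      fix r assume r: "aff_inc r L \<and> aff_gain L r - det2 r q = t"
      then obtain y' where "r = (e, y')" using Vert by (cases r) auto
      with r have "(a - e) * y' = (a - e) * y"
        using gain[of y'] \<open>(a - e) * y = t + e * b\<close> by (simp add: algebra_simps)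
      then show "r = (e, y)" using \<open>r = (e, y')\<close> nz by simp
    qed
  next
    case (NonVert m c)
    then have nz: "c - b + a * m \<noteq> 0" using assms q by (simp add: algebra_simps)
    have gain: "aff_gain L (x, m * x + c) - det2 (x, m * x + c) q = (c - b + a * m) * x + a * c" for x
      using NonVert q by (simp add: det2_def algebra_simps)
    define x where "x = (t - a * c) / (c - b + a * m)"
    have "(c - b + a * m) * x = t - a * c" using nz unfolding x_def by simp
    show ?thesis
    proof (rule ex1I[of _ "(x, m * x + c)"])
      show "aff_inc (x, m * x + c) L \<and> aff_gain L (x, m * x + c) - det2 (x, m * x + c) q = t"
        using NonVert gain[of x] \<open>(c - b + a * m) * x = t - a * c\<close> by simp
    next
      fix r assume r: "aff_inc r L \<and> aff_gain L r - det2 r q = t"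
      then obtain x' where "r = (x', m * x' + c)" using NonVert by (cases r) auto
      with r have "(c - b + a * m) * x' + a * c = t"
        using gain[of x'] by simp
      then have "(c - b + a * m) * x' + a * c = (c - b + a * m) * x + a * c"
        using \<open>(c - b + a * m) * x = t - a * c\<close> by simp
      then have "(c - b + a * m) * x' = (c - b + a * m) * x"
        by (rule add_right_imp_eq)
      then show "r = (x, m * x + c)" using \<open>r = (x', m * x' + c)\<close> nz by simp
    qed
  qed
qed

abbreviation aff_M_inc ::
    "('a::field \<times> 'a, 'a aline, 'a) mpoint \<Rightarrow> ('a \<times> 'a, 'a) mline \<Rightarrow> bool" where
  "aff_M_inc \<equiv> M_inc UNIV UNIV aff_inc UNIV aff_gain (\<lambda>g lam. g + lam)"

lemma aff_M_inc_MY_iff: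
  "aff_M_inc (MY L lam) c \<longleftrightarrow> (\<exists>r. aff_inc r L \<and> c = MZ r (aff_gain L r + lam))"
  by (cases c) auto

lemma aff_M_concurrent_iff:
  assumes "r \<noteq> q"
  shows "(\<exists>Q. aff_M_inc Q (MZ r mu) \<and> aff_M_inc Q (MZ q nu)) \<longleftrightarrow> mu - nu = det2 r q"
proof
  assume "\<exists>Q. aff_M_inc Q (MZ r mu) \<and> aff_M_inc Q (MZ q nu)"
  then obtain Q where Q: "aff_M_inc Q (MZ r mu)" "aff_M_inc Q (MZ q nu)" by blast
  then obtain M k where "Q = MY M k" using assms by (cases Q) auto
  with Q have "aff_inc r M" "aff_inc q M" "mu = aff_gain M r + k" "nu = aff_gain M q + k"
    by auto
  then show "mu - nu = det2 r q" using aff_gain_diff by fastforce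
next
  assume diff: "mu - nu = det2 r q"
  obtain M where M: "aff_inc r M" "aff_inc q M" using aff_ex_line_through by blast
  then have "mu = aff_gain M r + (nu - aff_gain M q)"
    using diff aff_gain_diff[OF M] by (simp add: algebra_simps)
  then have "aff_M_inc (MY M (nu - aff_gain M q)) (MZ r mu) \<and>
      aff_M_inc (MY M (nu - aff_gain M q)) (MZ q nu)"
    using M by simp
  then show "\<exists>Q. aff_M_inc Q (MZ r mu) \<and> aff_M_inc Q (MZ q nu)" by blast
qed

lemma aff_M_concurrent_point_unique:
  assumes "r \<noteq> q" "aff_M_inc Q (MZ r mu)" "aff_M_inc Q (MZ q nu)"
    "aff_M_inc Q' (MZ r mu)" "aff_M_inc Q' (MZ q nu)"
  shows "Q = Q'"
proof -
  obtain M k M' k' where "Q = MY M k" "Q' = MY M' k'"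
    using assms by (cases Q; cases Q') auto
  with assms have "M = M'" using aff_line_unique[OF \<open>r \<noteq> q\<close>] by auto
  with assms \<open>Q = MY M k\<close> \<open>Q' = MY M' k'\<close> show ?thesis by auto
qed

lemma aff_M_two_points_two_lines:
  assumes "aff_M_inc Q c" "aff_M_inc Q' c" "aff_M_inc Q c'" "aff_M_inc Q' c'"
  shows "Q = Q' \<or> c = c'"
proof -
  obtain r mu r' mu' where c: "c = MZ r mu" "c' = MZ r' mu'" by (cases c; cases c') auto
  show ?thesis
  proof (cases "r = r'")
    case True
    then show ?thesis using assms c by (cases Q; cases Q') auto
  next
    case False
    then show ?thesis using aff_M_concurrent_point_unique[OF False] assms c by simp
  qed
qed

lemma aff_M_ex1_line_meeting_MX:
  assumes "\<not> aff_M_inc (MX p) (MZ q nu)"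
  shows "\<exists>!c. aff_M_inc (MX p) c \<and> (\<exists>Q. aff_M_inc Q c \<and> aff_M_inc Q (MZ q nu))"
proof (rule ex1I[of _ "MZ p (nu + det2 p q)"])
  have "p \<noteq> q" using assms by simp
  then show "aff_M_inc (MX p) (MZ p (nu + det2 p q)) \<and>
      (\<exists>Q. aff_M_inc Q (MZ p (nu + det2 p q)) \<and> aff_M_inc Q (MZ q nu))"
    using aff_M_concurrent_iff[OF \<open>p \<noteq> q\<close>, of "nu + det2 p q" nu] by simp
  fix c assume c: "aff_M_inc (MX p) c \<and> (\<exists>Q. aff_M_inc Q c \<and> aff_M_inc Q (MZ q nu))"
  then obtain mu where "c = MZ p mu" by (cases c) auto
  with c have "mu - nu = det2 p q" using aff_M_concurrent_iff[OF \<open>p \<noteq> q\<close>] by blast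
  then show "c = MZ p (nu + det2 p q)" using \<open>c = MZ p mu\<close> by (simp add: diff_eq_eq add.commute)
qed

lemma aff_M_ex1_line_meeting_on_line:
  assumes "\<not> aff_M_inc (MY L lam) (MZ q nu)" and "aff_inc q L"
  shows "\<exists>!c. aff_M_inc (MY L lam) c \<and> (\<exists>Q. aff_M_inc Q c \<and> aff_M_inc Q (MZ q nu))"
proof (rule ex1I[of _ "MZ q (aff_gain L q + lam)"])
  show "aff_M_inc (MY L lam) (MZ q (aff_gain L q + lam)) \<and>
      (\<exists>Q. aff_M_inc Q (MZ q (aff_gain L q + lam)) \<and> aff_M_inc Q (MZ q nu))"
    using \<open>aff_inc q L\<close> by (intro conjI exI[of _ "MX q"]) auto
  fix c assume c: "aff_M_inc (MY L lam) c \<and> (\<exists>Q. aff_M_inc Q c \<and> aff_M_inc Q (MZ q nu))"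
  then obtain r where r: "aff_inc r L" "c = MZ r (aff_gain L r + lam)"
    using aff_M_inc_MY_iff by blast
  have "r = q"
  proof (rule ccontr)
    assume "r \<noteq> q"
    then have "aff_gain L r + lam - nu = det2 r q"
      using c r aff_M_concurrent_iff by blast
    then have "nu = aff_gain L q + lam"
      using aff_gain_diff[OF r(1) \<open>aff_inc q L\<close>] by (simp add: algebra_simps)
    then show False using assms by simp
  qed
  then show "c = MZ q (aff_gain L q + lam)" using r by simp
qed

lemma aff_M_ex1_line_meeting_off_line:
  assumes "\<not> aff_inc q L"
  shows "\<exists>!c. aff_M_inc (MY L lam) c \<and> (\<exists>Q. aff_M_inc Q c \<and> aff_M_inc Q (MZ q nu))"
proof -
  have meets_iff: "(\<exists>Q. aff_M_inc Q (MZ r (aff_gain L r + lam)) \<and> aff_M_inc Q (MZ q nu)) \<longleftrightarrow>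
      aff_gain L r - det2 r q = nu - lam" if "aff_inc r L" for r
  proof -
    have "r \<noteq> q" using that assms by auto
    then show ?thesis using aff_M_concurrent_iff by (simp add: algebra_simps)
  qed
  obtain r where r: "aff_inc r L" "aff_gain L r - det2 r q = nu - lam"
    and r_unique: "\<And>r'. aff_inc r' L \<Longrightarrow> aff_gain L r' - det2 r' q = nu - lam \<Longrightarrow> r' = r"
    using ex1_point_with_gain[OF assms] by metis
  show ?thesis
  proof (rule ex1I[of _ "MZ r (aff_gain L r + lam)"])
    show "aff_M_inc (MY L lam) (MZ r (aff_gain L r + lam)) \<and>
        (\<exists>Q. aff_M_inc Q (MZ r (aff_gain L r + lam)) \<and> aff_M_inc Q (MZ q nu))"
      using r meets_iff by simp
    fix c assume c: "aff_M_inc (MY L lam) c \<and> (\<exists>Q. aff_M_inc Q c \<and> aff_M_inc Q (MZ q nu))"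
    then obtain r' where r': "aff_inc r' L" "c = MZ r' (aff_gain L r' + lam)"
      using aff_M_inc_MY_iff by blast
    then have "r' = r" using c meets_iff r_unique by blast
    then show "c = MZ r (aff_gain L r + lam)" using r' by simp
  qed
qed

lemma aff_M_ex1_line_meeting:
  assumes "\<not> aff_M_inc Q c"
  shows "\<exists>!c'. aff_M_inc Q c' \<and> (\<exists>Q'. aff_M_inc Q' c' \<and> aff_M_inc Q' c)"
proof -
  obtain q nu where c: "c = MZ q nu" by (cases c)
  show ?thesis
  proof (cases Q)
    case (MX p)
    then show ?thesis using assms aff_M_ex1_line_meeting_MX[of p q nu] c by simp
  next
    case (MY L lam)
    then show ?thesis
      using assms c aff_M_ex1_line_meeting_on_line[of L lam q nu]
        aff_M_ex1_line_meeting_off_line[of q L lam nu]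
      by (cases "aff_inc q L") simp_all
  qed
qed

lemma M_points_UNIV: "M_points UNIV UNIV UNIV = UNIV"
proof -
  have "Q \<in> M_points UNIV UNIV UNIV" for Q by (cases Q) (auto simp: M_points_def)
  then show ?thesis by blast
qed

lemma M_lines_UNIV: "M_lines UNIV UNIV = UNIV"
proof -
  have "c \<in> M_lines UNIV UNIV" for c by (cases c) (auto simp: M_lines_def)
  then show ?thesis by blast
qed

lemma gq_axioms_aff_M: "gq_axioms UNIV UNIV aff_M_inc"
proof
  show "\<exists>Q c. aff_M_inc Q c" by (intro exI[of _ "MX (0, 0)"] exI[of _ "MZ (0, 0) 0"]) simp
  show "aff_M_inc Q c \<Longrightarrow> aff_M_inc Q' c \<Longrightarrow> aff_M_inc Q c' \<Longrightarrow> aff_M_inc Q' c' \<Longrightarrow>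
      Q = Q' \<or> c = c'" for Q Q' c c' by (rule aff_M_two_points_two_lines)
  show "\<not> aff_M_inc Q c \<Longrightarrow> \<exists>!c'. aff_M_inc Q c' \<and> (\<exists>Q'. aff_M_inc Q' c' \<and> aff_M_inc Q' c)"
    for Q c by (rule aff_M_ex1_line_meeting)
qed simp_all

theorem theorem7:
  shows "generalized_quadrangle
           (M_points (UNIV :: ('a::field \<times> 'a) set) (UNIV :: 'a aline set) (UNIV :: 'a set))
           (M_lines (UNIV :: ('a \<times> 'a) set) (UNIV :: 'a set))
           (M_inc UNIV UNIV aff_inc UNIV aff_gain (\<lambda>g lam. g + lam))"
  unfolding M_points_UNIV M_lines_UNIV
  using gq_axioms_aff_M by (rule gq_axioms.generalized_quadrangle)

end
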